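(* Let $E$ be a real Hilbert space with $\dim(E)\ge2$, $h\in E$ a unit vector, and $f:\mathbb{R}_{\ge0}\to\mathbb{R}_{\ge0}$ with $f(d)=0$ iff $d=0$. Let $x\preceq_f y\iff f(\|y_\perp-x_\perp\|)\le y_h-x_h$, and assume $(E,\preceq_f)$ is a sponge. Then $f(d)+f(e)\le\max(f(d+e),f(|d-e|))$ for all $d,e\in\mathbb{R}_{\ge0}$. If $\dim(E)\ge3$, then $f$ is square-superadditive, i.e. $f(\sqrt{d^2+e^2})\ge f(d)+f(e)$ for all $d,e\ge0$.
   Context: For $x\in E$ write $x=x_h h+x_\perp$ with $x_h=(x,h)$ and $x_\perp$ orthogonal to $h$. An oriented set $(S,\preceq)$ (with $\preceq$ reflexive and antisymmetric) is a sponge if every finite, nonempty, right-bounded subset has a join and every finite, nonempty, left-bounded subset has a meet. Here $P$ is right-bounded if some $s$ has $p\preceq s$ for all $p\in P$; the join of $P$ is an $x$ with $p\preceq x$ for all $p\in P$ and $x\preceq y$ whenever $p\preceq y$ for all $p\in P$; left-bounded and meet are defined dually. *)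

theory Defs
  imports "HOL-Analysis.Analysis"
begin

definition is_join :: "('a \<Rightarrow> 'a \<Rightarrow> bool) \<Rightarrow> 'a set \<Rightarrow> 'a \<Rightarrow> bool" where
  "is_join le P x \<longleftrightarrow> (\<forall>p\<in>P. le p x) \<and> (\<forall>y. (\<forall>p\<in>P. le p y) \<longrightarrow> le x y)"

definition is_meet :: "('a \<Rightarrow> 'a \<Rightarrow> bool) \<Rightarrow> 'a set \<Rightarrow> 'a \<Rightarrow> bool" where
  "is_meet le P x \<longleftrightarrow> (\<forall>p\<in>P. le x p) \<and> (\<forall>y. (\<forall>p\<in>P. le y p) \<longrightarrow> le y x)"

definition sponge :: "('a \<Rightarrow> 'a \<Rightarrow> bool) \<Rightarrow> bool" where
  "sponge le \<longleftrightarrow>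
     (\<forall>x. le x x) \<and> (\<forall>x y. le x y \<and> le y x \<longrightarrow> x = y) \<and>
     (\<forall>P. finite P \<and> P \<noteq> {} \<and> (\<exists>s. \<forall>p\<in>P. le p s) \<longrightarrow> (\<exists>x. is_join le P x)) \<and>
     (\<forall>P. finite P \<and> P \<noteq> {} \<and> (\<exists>s. \<forall>p\<in>P. le s p) \<longrightarrow> (\<exists>x. is_meet le P x))"

definition perp :: "'a::real_inner \<Rightarrow> 'a \<Rightarrow> 'a" where
  "perp h x = x - (x \<bullet> h) *\<^sub>R h"

definition cone_le :: "(real \<Rightarrow> real) \<Rightarrow> 'a::real_inner \<Rightarrow> 'a \<Rightarrow> 'a \<Rightarrow> bool" where
  "cone_le f h x y \<longleftrightarrow> f (norm (perp h y - perp h x)) \<le> y \<bullet> h - x \<bullet> h"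

text \<open>dim(E) >= n: there exist n linearly independent vectors (covers infinite dimension).\<close>
definition dim_ge :: "'a::real_vector itself \<Rightarrow> nat \<Rightarrow> bool" where
  "dim_ge _ n \<longleftrightarrow> (\<exists>B::'a set. finite B \<and> card B = n \<and> independent B)"

end

theory Submission
  imports Defs
begin

text \<open>Reflections in hyperplanes containing \<open>h\<close> are automorphisms of \<open>\<preceq>\<^sub>f\<close>, so in a sponge
  they fix the join of every pair they leave invariant. For a unit vector \<open>u \<bottom> h\<close> and \<open>c \<ge> 0\<close>
  the join of \<open>\<plusminus>c u\<close> is therefore fixed by the reflection in \<open>u\<close> and by all reflections in
  directions orthogonal to \<open>h\<close> and \<open>u\<close>, so it lies on the axis \<open>\<real> h\<close>; being below the upper
  bound \<open>f c h\<close> and above \<open>\<plusminus>c u\<close> it is exactly \<open>f c h\<close>. Now every \<open>y + m h\<close> with \<open>y \<bottom> h\<close> and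
  \<open>m = max f(\<parallel>y \<plusminus> c u\<parallel>)\<close> is an upper bound of \<open>\<plusminus>c u\<close>, hence lies above \<open>f c h\<close>, which says
  \<open>f \<parallel>y\<parallel> + f c \<le> m\<close>. The choice \<open>y = e u\<close> gives the first inequality, and \<open>y = e w\<close> with
  \<open>w \<bottom> h, u\<close> (available when \<open>dim E \<ge> 3\<close>) gives square-superadditivity.\<close>

lemma is_join_involution:
  assumes mono: "\<And>x y. le (\<sigma> x) (\<sigma> y) = le x y"
    and inv: "\<And>x. \<sigma> (\<sigma> x) = x"
    and P: "\<sigma> ` P \<subseteq> P"
    and J: "is_join le P J"
  shows "is_join le P (\<sigma> J)"
  unfolding is_join_def
proof safe
  fix p assume "p \<in> P"
  then have "le (\<sigma> p) J" using J P unfolding is_join_def by blast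
  then show "le p (\<sigma> J)" using mono[of "\<sigma> p" J] inv by simp
next
  fix y assume y: "\<forall>p\<in>P. le p y"
  have "le (\<sigma> p) y" if "p \<in> P" for p using y P that by blast
  then have "\<forall>p\<in>P. le p (\<sigma> y)" using mono inv by metis
  then have "le J (\<sigma> y)" using J unfolding is_join_def by blast
  then show "le (\<sigma> J) y" using mono[of J "\<sigma> y"] inv by simp
qed

lemma sponge_join_fixed:
  assumes "sponge le"
    and "\<And>x y. le (\<sigma> x) (\<sigma> y) = le x y" "\<And>x. \<sigma> (\<sigma> x) = x" "\<sigma> ` P \<subseteq> P"
    and J: "is_join le P J"
  shows "\<sigma> J = J"
proof -
  have "is_join le P (\<sigma> J)" using is_join_involution assms(2-4) J .
  then have "le J (\<sigma> J)" "le (\<sigma> J) J" using J unfolding is_join_def by blast+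
  then show ?thesis using \<open>sponge le\<close> unfolding sponge_def by blast
qed

lemma sponge_ex_join:
  assumes "sponge le" "finite P" "P \<noteq> {}" "\<And>p. p \<in> P \<Longrightarrow> le p s"
  obtains x where "is_join le P x"
proof -
  from assms(1) have "\<forall>P. finite P \<and> P \<noteq> {} \<and> (\<exists>s. \<forall>p\<in>P. le p s) \<longrightarrow> (\<exists>x. is_join le P x)"
    unfolding sponge_def by (elim conjE)
  then show ?thesis using assms(2-4) that by blast
qed

lemma perp_eq_self: "x \<bullet> h = 0 \<Longrightarrow> perp h x = x"
  unfolding perp_def by simp

lemma perp_add_scaleR: "norm h = 1 \<Longrightarrow> perp h (x + t *\<^sub>R h) = perp h x"
  unfolding perp_def by (simp add: inner_add_left norm_eq_1 algebra_simps)

lemma perp_scaleR_self: "norm h = 1 \<Longrightarrow> perp h (t *\<^sub>R h) = 0"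
  using perp_add_scaleR[of h 0 t] unfolding perp_def by simp

lemma inner_perp: "norm h = 1 \<Longrightarrow> perp h x \<bullet> h = 0"
  unfolding perp_def by (simp add: inner_diff_left norm_eq_1)

lemma inner_perp_self: "norm h = 1 \<Longrightarrow> x \<bullet> perp h x = (norm (perp h x))\<^sup>2"
  unfolding perp_def power2_norm_eq_inner
  by (simp add: inner_diff_left inner_diff_right inner_commute[of h x] norm_eq_1)

definition reflection :: "'a::real_inner \<Rightarrow> 'a \<Rightarrow> 'a" where
  "reflection w x = x - (2 * (x \<bullet> w)) *\<^sub>R w"

lemma reflection_involution:
  assumes "norm w = 1"
  shows "reflection w (reflection w x) = x"
proof -
  have "w \<bullet> w = 1" using assms by (simp add: norm_eq_1)
  then have "reflection w x \<bullet> w = - (x \<bullet> w)"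
    unfolding reflection_def by (simp add: inner_diff_left)
  then show ?thesis unfolding reflection_def[of w "reflection w x"] by (simp add: reflection_def)
qed

lemma norm_reflection:
  assumes "norm w = 1"
  shows "norm (reflection w x) = norm x"
proof -
  have "w \<bullet> w = 1" using assms by (simp add: norm_eq_1)
  then have "reflection w x \<bullet> reflection w x = x \<bullet> x"
    unfolding reflection_def
    by (simp add: inner_diff_left inner_diff_right inner_commute[of w x] algebra_simps)
  then show ?thesis by (simp add: norm_eq_sqrt_inner)
qed

lemma reflection_diff: "reflection w y - reflection w x = reflection w (y - x)"
  unfolding reflection_def by (simp add: inner_diff_left algebra_simps)

lemma reflection_fixed_iff:
  assumes "w \<noteq> 0"
  shows "reflection w x = x \<longleftrightarrow> x \<bullet> w = 0"
  using assms unfolding reflection_def by auto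

lemma inner_reflection_orthogonal: "w \<bullet> h = 0 \<Longrightarrow> reflection w x \<bullet> h = x \<bullet> h"
  unfolding reflection_def by (simp add: inner_diff_left)

lemma perp_reflection:
  assumes "w \<bullet> h = 0"
  shows "perp h (reflection w x) = reflection w (perp h x)"
proof -
  have "perp h x \<bullet> w = x \<bullet> w"
    using assms unfolding perp_def by (simp add: inner_diff_left inner_commute[of h w])
  then show ?thesis
    using assms unfolding perp_def reflection_def by (simp add: inner_diff_left)
qed

lemma cone_le_reflection:
  assumes "norm w = 1" "w \<bullet> h = 0"
  shows "cone_le f h (reflection w x) (reflection w y) = cone_le f h x y"
  unfolding cone_le_def
  by (simp add: assms inner_reflection_orthogonal perp_reflection reflection_diff norm_reflection)

lemma sponge_join_orthogonal:
  assumes sp: "sponge (cone_le f h)" and w: "norm w = 1" "w \<bullet> h = 0"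
    and P: "reflection w ` P \<subseteq> P" and J: "is_join (cone_le f h) P J"
  shows "J \<bullet> w = 0"
proof -
  have "reflection w J = J"
    using sponge_join_fixed[OF sp cone_le_reflection[OF w] reflection_involution[OF w(1)] P J] .
  moreover have "w \<noteq> 0" using w(1) by auto
  ultimately show ?thesis by (simp add: reflection_fixed_iff)
qed

lemma dim_ge_ex_not_in_span:
  fixes S :: "'a::real_vector set"
  assumes "dim_ge TYPE('a) n" "finite S" "card S < n"
  obtains x where "x \<notin> span S"
proof -
  obtain B :: "'a set" where B: "finite B" "card B = n" "independent B"
    using assms(1) unfolding dim_ge_def by blast
  have "\<not> B \<subseteq> span S"
    using independent_span_bound[OF assms(2) B(3)] B(2) assms(3) by fastforce
  then show ?thesis using that by blast
qed

lemma dim_ge_ex_unit_orthogonal: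
  fixes S :: "'a::real_inner set"
  assumes "dim_ge TYPE('a) n" "finite S" "card S < n"
    and orthonormal: "pairwise orthogonal S" "\<And>s. s \<in> S \<Longrightarrow> norm s = 1"
  obtains w where "norm w = 1" "\<forall>s\<in>S. w \<bullet> s = 0"
proof -
  obtain x where x: "x \<notin> span S" using dim_ge_ex_not_in_span assms(1-3) by blast
  define v where "v = x - (\<Sum>b\<in>S. (x \<bullet> b) *\<^sub>R b)"
  have "v \<bullet> s = 0" if "s \<in> S" for s
  proof -
    have "(\<Sum>b\<in>S. (x \<bullet> b) *\<^sub>R b) \<bullet> s = (\<Sum>b\<in>S. if b = s then x \<bullet> s else 0)"
      unfolding inner_sum_left using that orthonormal
      by (intro sum.cong) (auto simp: pairwise_def orthogonal_def norm_eq_1)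
    then show ?thesis using that assms(2) by (simp add: v_def inner_diff_left)
  qed
  moreover have "(\<Sum>b\<in>S. (x \<bullet> b) *\<^sub>R b) \<in> span S"
    by (intro span_sum span_scale span_base)
  then have "v \<noteq> 0" using x by (auto simp: v_def)
  ultimately show ?thesis by (intro that[of "v /\<^sub>R norm v"]) auto
qed

lemma cone_le_antipodal_upper_bound:
  fixes h u :: "'a::real_inner"
  assumes h: "norm h = 1" and u: "norm u = 1" "u \<bullet> h = 0" and c: "c \<ge> 0"
    and p: "p \<in> {- c *\<^sub>R u, c *\<^sub>R u}"
  shows "cone_le f h p (f c *\<^sub>R h)"
proof -
  have "h \<bullet> h = 1" using h by (simp add: norm_eq_1)
  then show ?thesis using p h u c by (auto simp: cone_le_def perp_eq_self perp_scaleR_self)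
qed

lemma cone_le_join_antipodal:
  fixes h u :: "'a::real_inner"
  assumes h: "norm h = 1" and u: "norm u = 1" "u \<bullet> h = 0" and f0: "f 0 = 0"
    and sp: "sponge (cone_le f h)" and c: "c \<ge> 0"
    and J: "is_join (cone_le f h) {- c *\<^sub>R u, c *\<^sub>R u} J"
  shows "J = f c *\<^sub>R h"
proof -
  let ?P = "{- c *\<^sub>R u, c *\<^sub>R u}"
  have "reflection u ` ?P \<subseteq> ?P"
    using u(1) by (auto simp: reflection_def norm_eq_1 algebra_simps scaleR_2[symmetric])
  then have Ju: "J \<bullet> u = 0" using sponge_join_orthogonal[OF sp u _ J] by blast
  have perp_J: "perp h J = 0"
  proof (rule ccontr)
    assume ne: "perp h J \<noteq> 0"
    define r where "r = perp h J /\<^sub>R norm (perp h J)"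
    have r: "norm r = 1" "r \<bullet> h = 0" using ne inner_perp[OF h] by (auto simp: r_def)
    have "u \<bullet> r = 0"
      using Ju u(2) by (simp add: r_def perp_def inner_diff_right inner_commute[of u])
    then have "reflection r ` ?P \<subseteq> ?P" by (auto simp: reflection_def)
    then have "J \<bullet> r = 0" using sponge_join_orthogonal[OF sp r _ J] by blast
    then have "J \<bullet> perp h J = 0" using ne by (simp add: r_def)
    then show False using ne inner_perp_self[OF h] by simp
  qed
  have "cone_le f h (c *\<^sub>R u) J" using J unfolding is_join_def by blast
  then have "f c \<le> J \<bullet> h" using perp_J u c by (simp add: cone_le_def perp_eq_self)
  moreover have "cone_le f h J (f c *\<^sub>R h)"
    using J cone_le_antipodal_upper_bound[OF h u c] unfolding is_join_def by blast
  then have "J \<bullet> h \<le> f c" using perp_J h f0 by (simp add: cone_le_def perp_scaleR_self norm_eq_1)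
  moreover have "J = (J \<bullet> h) *\<^sub>R h" using perp_J unfolding perp_def by simp
  ultimately show ?thesis by simp
qed

lemma sponge_cone_le_max_bound:
  fixes h u y :: "'a::real_inner"
  assumes h: "norm h = 1" and u: "norm u = 1" "u \<bullet> h = 0" and f0: "f 0 = 0"
    and sp: "sponge (cone_le f h)" and c: "c \<ge> 0" and y: "y \<bullet> h = 0"
  shows "f (norm y) + f c \<le> max (f (norm (y + c *\<^sub>R u))) (f (norm (y - c *\<^sub>R u)))"
    (is "_ \<le> ?m")
proof -
  let ?P = "{- c *\<^sub>R u, c *\<^sub>R u}"
  have "finite ?P" "?P \<noteq> {}" by auto
  then obtain J where "is_join (cone_le f h) ?P J"
    by (rule sponge_ex_join[OF sp _ _ cone_le_antipodal_upper_bound[OF h u c]])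
  then have J: "is_join (cone_le f h) ?P (f c *\<^sub>R h)"
    using cone_le_join_antipodal[OF h u f0 sp c] by simp
  have hh: "h \<bullet> h = 1" using h by (simp add: norm_eq_1)
  have Y: "perp h (y + ?m *\<^sub>R h) = y" "(y + ?m *\<^sub>R h) \<bullet> h = ?m"
    using y hh by (simp_all add: perp_add_scaleR[OF h] perp_eq_self inner_add_left)
  have "cone_le f h p (y + ?m *\<^sub>R h)" if "p \<in> ?P" for p
  proof -
    have "perp h p = p" "p \<bullet> h = 0" using that u(2) by (auto simp: perp_eq_self)
    moreover have "f (norm (y - p)) \<le> ?m" using that by auto
    ultimately show ?thesis unfolding cone_le_def Y by simp
  qed
  then have "cone_le f h (f c *\<^sub>R h) (y + ?m *\<^sub>R h)" using J unfolding is_join_def by blast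
  then show ?thesis unfolding cone_le_def Y perp_scaleR_self[OF h] using hh by simp
qed

lemma sponge_cone_le_max_ineq:
  fixes h :: "'a::real_inner"
  assumes dim: "dim_ge TYPE('a) 2" and h: "norm h = 1" and f0: "f 0 = 0"
    and sp: "sponge (cone_le f h)" and d: "d \<ge> 0" and e: "e \<ge> 0"
  shows "f d + f e \<le> max (f (d + e)) (f \<bar>d - e\<bar>)"
proof -
  obtain u where u: "norm u = 1" "u \<bullet> h = 0"
    using dim_ge_ex_unit_orthogonal[OF dim, of "{h}"] h by auto
  have "f (norm (e *\<^sub>R u)) + f d
      \<le> max (f (norm (e *\<^sub>R u + d *\<^sub>R u))) (f (norm (e *\<^sub>R u - d *\<^sub>R u)))"
    using sponge_cone_le_max_bound[OF h u f0 sp d, of "e *\<^sub>R u"] u(2) by simp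
  moreover have "e *\<^sub>R u + d *\<^sub>R u = (d + e) *\<^sub>R u" "e *\<^sub>R u - d *\<^sub>R u = (e - d) *\<^sub>R u"
    by (simp_all add: algebra_simps)
  ultimately show ?thesis using u e d by (simp add: abs_minus_commute add.commute)
qed

lemma sponge_cone_le_square_superadditive:
  fixes h :: "'a::real_inner"
  assumes dim: "dim_ge TYPE('a) 3" and h: "norm h = 1" and f0: "f 0 = 0"
    and sp: "sponge (cone_le f h)" and d: "d \<ge> 0" and e: "e \<ge> 0"
  shows "f d + f e \<le> f (sqrt (d\<^sup>2 + e\<^sup>2))"
proof -
  obtain u where u: "norm u = 1" "u \<bullet> h = 0"
    using dim_ge_ex_unit_orthogonal[OF dim, of "{h}"] h by auto
  have "finite {h, u}" "card {h, u} < 3" by (simp_all add: card_insert_if)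
  moreover have "pairwise orthogonal {h, u}"
    using u(2) by (simp add: pairwise_insert orthogonal_def inner_commute)
  moreover have "\<And>s. s \<in> {h, u} \<Longrightarrow> norm s = 1" using h u(1) by auto
  ultimately obtain w where "norm w = 1" "\<forall>s\<in>{h, u}. w \<bullet> s = 0"
    by (rule dim_ge_ex_unit_orthogonal[OF dim])
  then have w: "norm w = 1" "w \<bullet> h = 0" "w \<bullet> u = 0" by auto
  have norm_eq: "norm (e *\<^sub>R w + d' *\<^sub>R u) = sqrt (d'\<^sup>2 + e\<^sup>2)" for d'
  proof -
    have "orthogonal (e *\<^sub>R w) (d' *\<^sub>R u)" using w(3) by (simp add: orthogonal_def)
    then have "(norm (e *\<^sub>R w + d' *\<^sub>R u))\<^sup>2 = (norm (e *\<^sub>R w))\<^sup>2 + (norm (d' *\<^sub>R u))\<^sup>2"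
      by (rule norm_add_Pythagorean)
    also have "\<dots> = d'\<^sup>2 + e\<^sup>2" using w(1) u(1) by (simp add: power_mult_distrib)
    finally show ?thesis by (metis norm_ge_zero real_sqrt_unique)
  qed
  have "f (norm (e *\<^sub>R w)) + f d
      \<le> max (f (norm (e *\<^sub>R w + d *\<^sub>R u))) (f (norm (e *\<^sub>R w - d *\<^sub>R u)))"
    using sponge_cone_le_max_bound[OF h u f0 sp d, of "e *\<^sub>R w"] w(2) by simp
  moreover have "norm (e *\<^sub>R w) = e" using w(1) e by simp
  moreover have "norm (e *\<^sub>R w - d *\<^sub>R u) = sqrt (d\<^sup>2 + e\<^sup>2)"
    using norm_eq[of "- d"] by simp
  ultimately show ?thesis using norm_eq[of d] by simp
qed

theorem mainTheorem15:
  fixes h :: "'a::{real_inner, complete_space}" and f :: "real \<Rightarrow> real"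
  assumes dim2: "dim_ge TYPE('a) 2"
    and unit: "norm h = 1"
    and fnonneg: "\<forall>d\<ge>0. f d \<ge> 0"
    and fzero: "\<forall>d\<ge>0. f d = 0 \<longleftrightarrow> d = 0"
    and sp: "sponge (cone_le f h)"
  shows "(\<forall>d\<ge>0. \<forall>e\<ge>0. f d + f e \<le> max (f (d + e)) (f \<bar>d - e\<bar>))
       \<and> (dim_ge TYPE('a) 3 \<longrightarrow> (\<forall>d\<ge>0. \<forall>e\<ge>0. f (sqrt (d\<^sup>2 + e\<^sup>2)) \<ge> f d + f e))"
proof -
  have f0: "f 0 = 0" using fzero by simp
  show ?thesis
  proof (intro conjI allI impI)
    fix d e :: real assume "d \<ge> 0" "e \<ge> 0"
    then show "f d + f e \<le> max (f (d + e)) (f \<bar>d - e\<bar>)"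
      by (rule sponge_cone_le_max_ineq[OF dim2 unit f0 sp])
  next
    fix d e :: real assume "dim_ge TYPE('a) 3" "d \<ge> 0" "e \<ge> 0"
    then show "f (sqrt (d\<^sup>2 + e\<^sup>2)) \<ge> f d + f e"
      by (rule sponge_cone_le_square_superadditive[OF _ unit f0 sp])
  qed
qed

end
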